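(* Let $q$ be odd, $G=\Omega_{2m+1}(q)$ with natural module $V$, and let $g\in G$ be regular semisimple. Then $g$ centralizes a nondegenerate $1$-space and $\dim C_V(g)=1$. Moreover, either $g$ stabilizes no other nondegenerate $1$-space, or $g$ acts as $-1$ on a nondegenerate $2$-space and stabilizes no other nondegenerate $1$-space.
   Context: $\Omega_{2m+1}(q)$ is the derived subgroup (of index $2$) of $\mathrm{SO}_{2m+1}(q)$ acting on a $(2m+1)$-dimensional $\mathbb F_q$-space with nondegenerate quadratic form. An element is regular semisimple if it is semisimple and its centralizer in the ambient algebraic group has connected component a maximal torus; equivalently it commutes with no nontrivial unipotent element. *)

theory Defs
  imports "HOL-Analysis.Analysis" "HOL-Algebra.Algebraic_Closure_Type"
begin

text \<open>Quadratic forms on the coordinate space 'a^'n, given by a coefficient matrix A: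
  Q(v) = sum_{i,j} A_ij v_i v_j (every quadratic form has this shape).\<close>

definition quad :: "'a::comm_ring_1^'n^'n \<Rightarrow> 'a^'n \<Rightarrow> 'a" where
  "quad A v = (\<Sum>i\<in>UNIV. \<Sum>j\<in>UNIV. A$i$j * v$i * v$j)"

definition polar :: "'a::comm_ring_1^'n^'n \<Rightarrow> 'a^'n \<Rightarrow> 'a^'n \<Rightarrow> 'a" where
  "polar A u v = quad A (u + v) - quad A u - quad A v"

definition nondegenerate_form :: "'a::comm_ring_1^'n^'n \<Rightarrow> bool" where
  "nondegenerate_form A \<longleftrightarrow> (\<forall>u. (\<forall>v. polar A u v = 0) \<longrightarrow> u = 0)"

definition nondeg_subspace :: "'a::field^'n^'n \<Rightarrow> ('a^'n) set \<Rightarrow> bool" where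
  "nondeg_subspace A U \<longleftrightarrow> vec.subspace U \<and>
     (\<forall>u\<in>U. (\<forall>v\<in>U. polar A u v = 0) \<longrightarrow> u = 0)"

definition SO :: "'a::comm_ring_1^'n^'n \<Rightarrow> ('a^'n^'n) set" where
  "SO A = {g. det g = 1 \<and> (\<forall>v. quad A (g *v v) = quad A v)}"

text \<open>Omega = derived subgroup of SO: the subgroup generated by all commutators
  (identity, commutators, closed under products; inverses of commutators are commutators).\<close>
inductive_set Omega :: "'a::field^'n^'n \<Rightarrow> ('a^'n^'n) set" for A where
  one: "mat 1 \<in> Omega A"
| comm: "g \<in> SO A \<Longrightarrow> h \<in> SO A \<Longrightarrow>
          g ** h ** matrix_inv g ** matrix_inv h \<in> Omega A"
| mult: "x \<in> Omega A \<Longrightarrow> y \<in> Omega A \<Longrightarrow> x ** y \<in> Omega A"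

definition lift_mat :: "'a::field^'n^'n \<Rightarrow> 'a alg_closure^'n^'n" where
  "lift_mat M = (\<chi> i j. to_ac (M$i$j))"

definition unipotent :: "'a::comm_ring_1^'n^'n \<Rightarrow> bool" where
  "unipotent u \<longleftrightarrow> (\<exists>k. (((**) (u - mat 1)) ^^ k) (mat 1) = 0)"

definition diagonal_mat :: "'a::zero^'n^'n \<Rightarrow> bool" where
  "diagonal_mat D \<longleftrightarrow> (\<forall>i j. i \<noteq> j \<longrightarrow> D$i$j = 0)"

definition semisimple :: "'a::field^'n^'n \<Rightarrow> bool" where
  "semisimple g \<longleftrightarrow> (\<exists>(P::'a alg_closure^'n^'n) (D::'a alg_closure^'n^'n). invertible P \<and> diagonal_mat D \<and>
      lift_mat g = P ** D ** matrix_inv P)"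

definition regular_semisimple :: "'a::field^'n^'n \<Rightarrow> 'a^'n^'n \<Rightarrow> bool" where
  "regular_semisimple A g \<longleftrightarrow> semisimple g \<and>
     (\<forall>u \<in> SO (lift_mat A). unipotent u \<and> u ** lift_mat g = lift_mat g ** u \<longrightarrow> u = mat 1)"

definition fixed_space :: "'a::field^'n^'n \<Rightarrow> ('a^'n) set" where
  "fixed_space g = {v. g *v v = v}"

end

theory Submission
  imports Defs "HOL-Number_Theory.Residues"
begin

(* Over the algebraic closure g is diagonalizable, and since it preserves the polar form B,
   B pairs the lambda-eigenspace of g with the 1/lambda-eigenspace.  Hence lambda and 1/lambda
   have equal multiplicity and the (+1)- and (-1)-eigenspaces are nondegenerate.
   A (+1)- or (-1)-eigenspace of dimension at least 3 would contain an isotropic vector e and a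
   vector w orthogonal to e but not proportional to it; the Eichler transformation
   x \<mapsto> x + B(e,x) w - (B(w,x) + Q(w) B(e,x)) e is then a nontrivial unipotent element of SO
   commuting with g, contradicting regularity.  So both multiplicities are at most 2.  As det g = 1
   the eigenvalues other than 1 contribute an even number to the odd dimension, hence 1 has
   multiplicity exactly 1 and -1 has multiplicity 0 or 2.  Eigenspace dimensions do not change
   under extension of scalars, and a nondegenerate line stable under g is an eigenline whose
   eigenvalue squares to 1. *)

definition bilin :: "'k::comm_ring_1^'n^'n \<Rightarrow> 'k^'n \<Rightarrow> 'k^'n \<Rightarrow> 'k" where
  "bilin M u v = (\<Sum>i\<in>UNIV. u$i * (M *v v)$i)"

lemma sum_matrix_vector_mult_transpose:
  fixes R :: "'k::comm_ring_1^'n^'n"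
  shows "(\<Sum>i\<in>UNIV. (R *v u)$i * w$i) = (\<Sum>i\<in>UNIV. u$i * (transpose R *v w)$i)"
proof -
  have "(\<Sum>i\<in>UNIV. (R *v u)$i * w$i) = (\<Sum>i\<in>UNIV. \<Sum>j\<in>UNIV. R$i$j * u$j * w$i)"
    unfolding matrix_vector_mult_def by (simp add: sum_distrib_right)
  also have "\<dots> = (\<Sum>j\<in>UNIV. \<Sum>i\<in>UNIV. R$i$j * u$j * w$i)" by (rule sum.swap)
  also have "\<dots> = (\<Sum>i\<in>UNIV. u$i * (transpose R *v w)$i)"
    unfolding matrix_vector_mult_def transpose_def by (simp add: sum_distrib_left mult_ac)
  finally show ?thesis .
qed

lemma bilin_matrix_vector_mult:
  fixes R M :: "'k::comm_ring_1^'n^'n"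
  shows "bilin M (R *v u) (R *v v) = bilin (transpose R ** M ** R) u v"
  unfolding bilin_def sum_matrix_vector_mult_transpose
  by (simp add: matrix_vector_mul_assoc matrix_mul_assoc)

lemma bilin_transpose: "bilin M v u = bilin (transpose M) u v"
  unfolding bilin_def sum_matrix_vector_mult_transpose[symmetric] by (simp add: mult.commute)

lemma bilin_commute: "transpose M = M \<Longrightarrow> bilin M u v = bilin M v u"
  by (metis bilin_transpose)

lemma polar_eq_bilin: "polar A u v = bilin (A + transpose A) u v"
proof -
  have "polar A u v = (\<Sum>i\<in>UNIV. \<Sum>j\<in>UNIV. A$i$j * u$i * v$j) + (\<Sum>i\<in>UNIV. \<Sum>j\<in>UNIV. A$i$j * v$i * u$j)"
    unfolding polar_def quad_def by (simp add: algebra_simps sum.distrib sum_subtractf)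
  also have "(\<Sum>i\<in>UNIV. \<Sum>j\<in>UNIV. A$i$j * v$i * u$j) = (\<Sum>j\<in>UNIV. \<Sum>i\<in>UNIV. A$i$j * v$i * u$j)"
    by (rule sum.swap)
  also have "(\<Sum>i\<in>UNIV. \<Sum>j\<in>UNIV. A$i$j * u$i * v$j) + (\<Sum>j\<in>UNIV. \<Sum>i\<in>UNIV. A$i$j * v$i * u$j)
     = bilin (A + transpose A) u v"
    unfolding bilin_def matrix_vector_mult_def transpose_def
    by (simp add: algebra_simps sum.distrib sum_distrib_left)
  finally show ?thesis .
qed

lemma polar_self: "polar A v v = 2 * quad A v"
  unfolding polar_def quad_def by (simp add: algebra_simps sum.distrib sum_distrib_left)

lemma transpose_add_transpose: "transpose (A + transpose A) = A + transpose (A::'k::comm_ring_1^'n^'n)"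
  by (simp add: vec_eq_iff transpose_def add.commute)

lemma matrix_vector_mult_axis: "((M::'k::comm_ring_1^'n^'m) *v axis j 1) $ i = M$i$j"
  unfolding matrix_vector_mult_def axis_def
  by (simp add: if_distrib[of "\<lambda>x. _ * x"] cong: if_cong)

lemma bilin_axis_right: "bilin M u (axis j 1) = (transpose M *v u)$j"
  unfolding bilin_def matrix_vector_mult_axis
  by (simp add: matrix_vector_mult_def transpose_def mult.commute)

lemma bilin_axis: "bilin M (axis i 1) (axis j 1) = M$i$j"
  unfolding bilin_axis_right matrix_vector_mult_axis by (simp add: transpose_def)

lemma bilin_inject: "(\<And>u v. bilin M u v = bilin N u v) \<Longrightarrow> M = N"
  by (metis bilin_axis vec_eq_iff)

lemma bilin_add_left: "bilin M (u + w) v = bilin M u v + bilin M w v"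
  unfolding bilin_def by (simp add: algebra_simps sum.distrib)

lemma bilin_add_right: "bilin M u (v + w) = bilin M u v + bilin M u w"
  unfolding bilin_def by (simp add: algebra_simps sum.distrib matrix_vector_right_distrib)

lemma bilin_scale_left: "bilin M (c *s u) v = c * bilin M u v"
  unfolding bilin_def by (simp add: algebra_simps sum_distrib_left)

lemma bilin_scale_right: "bilin M u (c *s v) = c * bilin M u v"
  unfolding bilin_def matrix_vector_mult_def by (simp add: algebra_simps sum_distrib_left)

lemma bilin_diff_left: "bilin M (u - w) v = bilin M u v - bilin M w v"
  unfolding bilin_def by (simp add: algebra_simps sum_subtractf)

lemma bilin_diff_right: "bilin M u (v - w) = bilin M u v - bilin M u w"
  unfolding bilin_def by (simp add: algebra_simps sum_subtractf matrix_vector_mult_diff_distrib)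

lemma bilin_zero_right [simp]: "bilin M u 0 = 0"
  unfolding bilin_def by simp

lemmas bilin_linear = bilin_add_left bilin_add_right bilin_diff_left bilin_diff_right
  bilin_scale_left bilin_scale_right

lemma subspace_bilin_kernel: "vec.subspace {x. bilin M u x = 0}"
  unfolding vec.subspace_def by (simp add: bilin_add_right bilin_scale_right)

lemma nondegenerate_form_invertible:
  assumes "nondegenerate_form (A::'k::field^'n^'n)"
  shows "invertible (A + transpose A)"
  unfolding invertible_left_inverse matrix_left_invertible_ker
proof (intro allI impI)
  fix u assume u: "(A + transpose A) *v u = 0"
  have "polar A u v = 0" for v
    using bilin_transpose[of "A + transpose A" v u] u
    by (simp add: polar_eq_bilin transpose_add_transpose bilin_def)
  thus "u = 0" using assms unfolding nondegenerate_form_def by blast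
qed

lemma two_neq_zero_if_odd_card:
  assumes "odd CARD('a::{finite,field})" shows "(2::'a) \<noteq> 0"
proof
  assume "(2::'a) = 0"
  hence "CHAR('a) dvd 2" using of_nat_eq_0_iff_char_dvd[of 2, where 'a='a] by simp
  hence "CHAR('a) = 2"
    using two_is_prime_nat[unfolded prime_nat_iff] CHAR_not_1[where 'a='a] by auto
  thus False using CHAR_dvd_CARD[where 'a='a] assms by simp
qed

lemma one_neq_minus_one: "(2::'k::ring_1) \<noteq> 0 \<Longrightarrow> 1 \<noteq> (-1::'k)"
  by (metis one_add_one add_eq_0_iff equation_minus_iff)

lemma matrix_mul_matrix_inv:
  assumes "invertible (A::'k::semiring_1^'n^'n)"
  shows "A ** matrix_inv A = mat 1" "matrix_inv A ** A = mat 1"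
  using assms unfolding invertible_def matrix_inv_def by (metis (mono_tags, lifting) someI_ex)+

lemma SO_mult: "g \<in> SO A \<Longrightarrow> h \<in> SO A \<Longrightarrow> g ** h \<in> SO A"
  by (simp add: SO_def det_mul matrix_vector_mul_assoc[symmetric])

lemma SO_matrix_inv:
  assumes g: "(g::'k::field^'n^'n) \<in> SO A" shows "matrix_inv g \<in> SO A"
proof -
  have "invertible g" using g by (simp add: SO_def invertible_det_nz)
  hence inv: "g ** matrix_inv g = mat 1" by (simp add: matrix_mul_matrix_inv)
  have "det g * det (matrix_inv g) = 1" using inv by (metis det_I det_mul)
  hence "det (matrix_inv g) = 1" using g by (simp add: SO_def)
  moreover have "quad A (matrix_inv g *v v) = quad A v" for v
  proof -
    have "quad A v = quad A (g *v (matrix_inv g *v v))"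
      by (simp add: matrix_vector_mul_assoc inv)
    thus ?thesis using g by (simp add: SO_def)
  qed
  ultimately show ?thesis by (simp add: SO_def)
qed

lemma Omega_subset_SO: "x \<in> Omega A \<Longrightarrow> x \<in> SO (A::'k::field^'n^'n)"
proof (induction rule: Omega.induct)
  case one
  show ?case by (simp add: SO_def)
qed (simp_all add: SO_mult SO_matrix_inv)

lemma SO_isometry:
  assumes "(g::'k::comm_ring_1^'n^'n) \<in> SO A"
  shows "transpose g ** (A + transpose A) ** g = A + transpose A"
proof (rule bilin_inject)
  fix u v
  have "polar A (g *v u) (g *v v) = polar A u v"
    using assms by (simp add: polar_def SO_def matrix_vector_right_distrib[symmetric])
  thus "bilin (transpose g ** (A + transpose A) ** g) u v = bilin (A + transpose A) u v"
    by (simp add: bilin_matrix_vector_mult[symmetric] polar_eq_bilin)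
qed

lemma SO_of_isometry:
  assumes two: "(2::'k::field) \<noteq> 0" and "det (u::'k^'n^'n) = 1"
    and iso: "transpose u ** (A + transpose A) ** u = A + transpose A"
  shows "u \<in> SO A"
proof -
  have "2 * quad A (u *v x) = 2 * quad A x" for x
    by (metis polar_self polar_eq_bilin bilin_matrix_vector_mult iso)
  thus ?thesis using assms by (simp add: SO_def)
qed

section \<open>Extension of scalars to the algebraic closure\<close>

definition lift_vec :: "'a::field^'n \<Rightarrow> 'a alg_closure^'n" where
  "lift_vec v = (\<chi> i. to_ac (v$i))"

lemma lift_mat_nth [simp]: "lift_mat M $ i $ j = to_ac (M$i$j)"
  by (simp add: lift_mat_def)

lemma lift_vec_nth [simp]: "lift_vec v $ i = to_ac (v$i)"
  by (simp add: lift_vec_def)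

lemma lift_mat_mult: "lift_mat (M ** N) = lift_mat M ** lift_mat N"
  by (simp add: vec_eq_iff matrix_matrix_mult_def to_ac_sum)

lemma lift_mat_vector_mult: "lift_mat M *v lift_vec v = lift_vec (M *v v)"
  by (simp add: vec_eq_iff matrix_vector_mult_def to_ac_sum)

lemma lift_mat_add: "lift_mat (M + N) = lift_mat M + lift_mat N"
  by (simp add: vec_eq_iff)

lemma lift_mat_diff: "lift_mat (M - N) = lift_mat M - lift_mat N"
  by (simp add: vec_eq_iff)

lemma lift_mat_transpose: "lift_mat (transpose M) = transpose (lift_mat M)"
  by (simp add: vec_eq_iff transpose_def)

lemma lift_mat_mat: "lift_mat (mat c) = mat (to_ac c)"
  by (simp add: vec_eq_iff mat_def)

lemma lift_vec_scale: "lift_vec (c *s v) = to_ac c *s lift_vec v"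
  by (simp add: vec_eq_iff)

lemma lift_vec_sum: "lift_vec (sum f T) = (\<Sum>x\<in>T. lift_vec (f x))"
  by (simp add: vec_eq_iff to_ac_sum sum_component)

lemma lift_vec_eq_0_iff [simp]: "lift_vec u = 0 \<longleftrightarrow> u = 0"
  by (simp add: vec_eq_iff)

lemma inj_lift_vec: "inj lift_vec"
  by (simp add: inj_on_def vec_eq_iff)

lemma det_lift_mat: "det (lift_mat M) = to_ac (det M)"
  unfolding det_def by (simp add: to_ac_sum to_ac_prod)

lemma invertible_lift_mat_iff: "invertible (lift_mat M) \<longleftrightarrow> invertible M"
  by (simp add: invertible_det_nz det_lift_mat)

lemma bilin_lift: "bilin (lift_mat M) (lift_vec u) (lift_vec v) = to_ac (bilin M u v)"
  unfolding bilin_def lift_mat_vector_mult by (simp add: to_ac_sum)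

lemma lift_vec_in_span:
  assumes "y \<in> vec.span S"
  shows "lift_vec y \<in> vec.span (lift_vec ` S)"
proof -
  obtain T r where T: "finite T" "T \<subseteq> S" "y = (\<Sum>a\<in>T. r a *s a)"
    using assms unfolding vec.span_explicit by blast
  have "lift_vec y = (\<Sum>a\<in>T. to_ac (r a) *s lift_vec a)"
    using T by (simp add: lift_vec_sum lift_vec_scale)
  also have "\<dots> \<in> vec.span (lift_vec ` S)"
    using T by (intro vec.span_sum vec.span_scale vec.span_base) auto
  finally show ?thesis .
qed

lemma independent_range_iff_kernel:
  fixes h :: "'n::finite \<Rightarrow> 'k::field^'m"
  assumes "inj h"
  shows "vec.independent (range h) \<longleftrightarrow> (\<forall>x. (\<chi> i j. h j $ i) *v x = 0 \<longrightarrow> x = 0)"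
proof -
  have mult: "(\<chi> i j. h j $ i) *v x = (\<Sum>j\<in>UNIV. x$j *s h j)" for x
    by (simp add: matrix_mult_sum column_def)
  have reindex: "(\<Sum>v\<in>range h. u v *s v) = (\<Sum>j\<in>UNIV. u (h j) *s h j)" for u
    using sum.reindex[OF assms, of "\<lambda>v. u v *s v"] by simp
  have "(\<forall>u. (\<Sum>v\<in>range h. u v *s v) = 0 \<longrightarrow> (\<forall>v\<in>range h. u v = 0))
      \<longleftrightarrow> (\<forall>x. (\<Sum>j\<in>UNIV. x$j *s h j) = 0 \<longrightarrow> x = (0::'k^'n))" (is "?indep \<longleftrightarrow> ?kernel")
  proof
    assume ?indep
    show ?kernel
    proof (intro allI impI)
      fix x :: "'k^'n"
      assume x: "(\<Sum>j\<in>UNIV. x$j *s h j) = 0"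
      have "(\<Sum>v\<in>range h. x $ (inv_into UNIV h v) *s v) = 0"
        unfolding reindex using x by (simp add: inv_into_f_f[OF assms])
      hence "x $ (inv_into UNIV h (h j)) = 0" for j
        using \<open>?indep\<close>[rule_format, of "\<lambda>v. x $ (inv_into UNIV h v)"] by blast
      thus "x = 0" by (simp add: vec_eq_iff inv_into_f_f[OF assms])
    qed
  next
    assume ?kernel
    show ?indep
    proof (intro allI impI ballI)
      fix u v
      assume "(\<Sum>v\<in>range h. u v *s v) = 0" and v: "v \<in> range h"
      hence "(\<chi> j. u (h j)) = (0::'k^'n)"
        using \<open>?kernel\<close> unfolding reindex by simp
      thus "u v = 0" using v by (auto simp: vec_eq_iff)
    qed
  qed
  thus ?thesis unfolding vec.independent_explicit mult by simp
qed

lemma invertible_iff_independent_columns: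
  fixes h :: "'n::finite \<Rightarrow> 'k::field^'n"
  assumes "inj h"
  shows "invertible (\<chi> i j. h j $ i) \<longleftrightarrow> vec.independent (range h)"
  unfolding invertible_left_inverse matrix_left_invertible_ker independent_range_iff_kernel[OF assms] ..

lemma independent_lift_vec_image:
  fixes S :: "('a::field^'n) set"
  assumes "vec.independent S"
  shows "vec.independent (lift_vec ` S)"
proof -
  obtain B where B: "S \<subseteq> B" "vec.independent B" "UNIV \<subseteq> vec.span B"
    using vec.maximal_independent_subset_extend[of S UNIV] assms by auto
  have "card B = CARD('n)"
    using vec.basis_card_eq_dim[of B UNIV] B by (simp add: card_cart_basis)
  then obtain h where h: "bij_betw h (UNIV::'n set) B"
    using finite_same_card_bij[of "UNIV::'n set" B] B(2) vec.finiteI_independent by auto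
  have inj: "inj h" "inj (lift_vec \<circ> h)"
    using h inj_compose[OF inj_lift_vec] by (auto simp: bij_betw_def)
  have "invertible (\<chi> i j. h j $ i)"
    using B(2) h by (simp add: invertible_iff_independent_columns[OF inj(1)] bij_betw_def)
  moreover have "lift_mat (\<chi> i j. h j $ i) = (\<chi> i j. (lift_vec \<circ> h) j $ i)"
    by (simp add: vec_eq_iff)
  ultimately have "invertible (\<chi> i j. (lift_vec \<circ> h) j $ i)"
    by (metis invertible_lift_mat_iff)
  hence "vec.independent (range (lift_vec \<circ> h))"
    using invertible_iff_independent_columns[OF inj(2)] by blast
  moreover have "range (lift_vec \<circ> h) = lift_vec ` B"
    using h by (auto simp: bij_betw_def)
  ultimately have "vec.independent (lift_vec ` B)" by simp
  thus ?thesis using B(1) by (meson image_mono vec.independent_mono)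
qed

lemma subspace_kernel: "vec.subspace {x. (M::'k::field^'n^'m) *v x = 0}"
  unfolding vec.subspace_def by (simp add: matrix_vector_right_distrib vec.scale)

lemma obtain_complement_subspace:
  fixes K :: "('k::field^'n) set"
  assumes K: "vec.subspace K"
  obtains C where "vec.independent C" "card C = CARD('n) - vec.dim K"
    "vec.span C \<inter> K \<subseteq> {0}" "\<And>x. \<exists>a b. x = a + b \<and> a \<in> vec.span C \<and> b \<in> K"
proof -
  obtain B0 where B0: "B0 \<subseteq> K" "vec.independent B0" "K \<subseteq> vec.span B0" "card B0 = vec.dim K"
    by (rule vec.basis_exists[of K])
  have K_span: "K = vec.span B0" using B0(1,3) vec.span_minimal[OF B0(1) K] by blast
  obtain B where B: "B0 \<subseteq> B" "vec.independent B" "UNIV \<subseteq> vec.span B"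
    using vec.maximal_independent_subset_extend[of B0 UNIV] B0(2) by auto
  have finB: "finite B" using B(2) vec.finiteI_independent by blast
  have cB: "card B = CARD('n)"
    using vec.basis_card_eq_dim[of B UNIV] B by (simp add: card_cart_basis)
  let ?C = "B - B0"
  have indC: "vec.independent ?C" using B(2) vec.independent_mono by blast
  have cC: "card ?C = CARD('n) - card B0" using cB B(1) finB by (simp add: card_Diff_subset finite_subset)
  have sums: "{x + y |x y. x \<in> vec.span ?C \<and> y \<in> vec.span B0} = UNIV"
  proof -
    have "vec.span (?C \<union> B0) = UNIV" using B(1,3) by (metis Un_Diff_cancel2 sup.absorb_iff1 top.extremum_uniqueI)
    thus ?thesis using vec.span_Un[of ?C B0] by simp
  qed
  have "vec.dim (UNIV::('k^'n) set) + vec.dim (vec.span ?C \<inter> vec.span B0) = card ?C + card B0"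
    using vec.dim_sums_Int[of "vec.span ?C" "vec.span B0"] sums indC B0(2)
    by (simp add: vec.dim_eq_card_independent)
  hence "vec.dim (vec.span ?C \<inter> vec.span B0) = 0"
    using cC B(1) finB cB card_mono[OF finB B(1)] by (simp add: card_cart_basis)
  hence int0: "vec.span ?C \<inter> K \<subseteq> {0}" unfolding K_span by (simp del: vec.dim_span)
  show ?thesis
  proof (rule that[OF indC _ int0])
    show "card ?C = CARD('n) - vec.dim K" using cC B0(4) by simp
    fix x :: "'k^'n"
    have "x \<in> {x + y |x y. x \<in> vec.span ?C \<and> y \<in> vec.span B0}" using sums by simp
    thus "\<exists>a b. x = a + b \<and> a \<in> vec.span ?C \<and> b \<in> K" unfolding K_span by blast
  qed
qed

lemma dim_kernel_add_dim_range:
  fixes M :: "'k::field^'n^'m"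
  shows "vec.dim {x. M *v x = 0} + vec.dim (range ((*v) M)) = CARD('n)"
proof -
  let ?K = "{x. M *v x = 0}"
  obtain C where C: "vec.independent C" "card C = CARD('n) - vec.dim ?K" "vec.span C \<inter> ?K \<subseteq> {0}"
    "\<And>x. \<exists>a b. x = a + b \<and> a \<in> vec.span C \<and> b \<in> ?K"
    using obtain_complement_subspace[OF subspace_kernel[of M]] by blast
  have inj: "inj_on ((*v) M) (vec.span C)"
  proof (rule inj_onI)
    fix x y assume xy: "x \<in> vec.span C" "y \<in> vec.span C" "M *v x = M *v y"
    have "x - y \<in> vec.span C" using xy by (simp add: vec.span_diff)
    moreover have "x - y \<in> ?K" using xy by (simp add: matrix_vector_mult_diff_distrib)
    ultimately show "x = y" using C(3) by auto
  qed
  have range: "range ((*v) M) = (*v) M ` vec.span C"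
  proof (intro subset_antisym subsetI)
    fix z assume "z \<in> range ((*v) M)"
    then obtain x where "z = M *v x" by blast
    moreover obtain a b where "x = a + b" "a \<in> vec.span C" "b \<in> ?K" using C(4) by blast
    ultimately have "z = M *v (a + b)" "a \<in> vec.span C" "b \<in> ?K" by simp_all
    thus "z \<in> (*v) M ` vec.span C" by (simp add: matrix_vector_right_distrib)
  qed blast
  have "vec.dim (range ((*v) M)) = vec.dim (vec.span C)"
    unfolding range by (rule vec.dim_image_eq[OF matrix_vector_mul_linear_gen])
      (use inj in \<open>simp add: vec.span_span\<close>)
  moreover have "vec.dim ?K \<le> CARD('n)"
    using vec.dim_subset[of ?K UNIV] by (simp add: card_cart_basis)
  ultimately show ?thesis using C(1,2) by (simp add: vec.dim_eq_card_independent)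
qed

lemma dim_range_lift_mat: "vec.dim (range ((*v) (lift_mat M))) = vec.dim (range ((*v) M))"
proof (rule antisym)
  obtain R where R: "R \<subseteq> range ((*v) M)" "vec.independent R" "range ((*v) M) \<subseteq> vec.span R"
    "card R = vec.dim (range ((*v) M))"
    by (rule vec.basis_exists)
  have finR: "finite R" using R(2) vec.finiteI_independent by blast
  have "card (lift_vec ` R) = card R"
    by (rule card_image[OF inj_on_subset[OF inj_lift_vec subset_UNIV]])
  moreover have "lift_vec ` R \<subseteq> range ((*v) (lift_mat M))"
    using R(1) by (auto simp: lift_mat_vector_mult[symmetric])
  ultimately show "vec.dim (range ((*v) M)) \<le> vec.dim (range ((*v) (lift_mat M)))"
    using vec.independent_card_le_dim independent_lift_vec_image[OF R(2)] R(4) by metis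
  have "column j (lift_mat M) = lift_vec (M *v axis j 1)" for j
    by (simp add: vec_eq_iff column_def matrix_vector_mult_axis)
  hence "lift_mat M *v x = (\<Sum>j\<in>UNIV. x$j *s lift_vec (M *v axis j 1))" for x
    by (simp add: matrix_mult_sum)
  moreover have "lift_vec (M *v axis j 1) \<in> vec.span (lift_vec ` R)" for j
    using R(3) by (auto intro: lift_vec_in_span)
  ultimately have "lift_mat M *v x \<in> vec.span (lift_vec ` R)" for x
    by (auto intro!: vec.span_sum vec.span_scale)
  hence "vec.dim (range ((*v) (lift_mat M))) \<le> card (lift_vec ` R)"
    using finR by (intro vec.dim_le_card) auto
  also have "\<dots> \<le> card R" using finR card_image_le by blast
  finally show "vec.dim (range ((*v) (lift_mat M))) \<le> vec.dim (range ((*v) M))" using R(4) by simp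
qed

lemma dim_kernel_lift_mat: "vec.dim {x. lift_mat M *v x = 0} = vec.dim {x. M *v x = 0}"
  using dim_kernel_add_dim_range[of M] dim_kernel_add_dim_range[of "lift_mat M"] dim_range_lift_mat[of M]
  by simp

definition eigenspace :: "'k::field^'n^'n \<Rightarrow> 'k \<Rightarrow> ('k^'n) set" where
  "eigenspace M c = {x. M *v x = c *s x}"

lemma subspace_eigenspace: "vec.subspace (eigenspace M c)"
  unfolding vec.subspace_def eigenspace_def
  by (simp add: matrix_vector_right_distrib vec.scale vec.scale_right_distrib vec.scale_scale mult.commute)

lemma mat_vector_mult: "mat c *v x = c *s (x::'k::comm_ring_1^'n)"
  by (simp add: vec_eq_iff matrix_vector_mult_def mat_def if_distrib[of "\<lambda>x. x * _"] cong: if_cong)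

lemma eigenspace_eq_kernel: "eigenspace M c = {x. (M - mat c) *v x = 0}"
  by (simp add: eigenspace_def matrix_vector_mult_diff_rdistrib mat_vector_mult)

lemma fixed_space_eq_eigenspace: "fixed_space g = eigenspace g 1"
  by (simp add: fixed_space_def eigenspace_def)

lemma dim_eigenspace_lift_mat:
  "vec.dim (eigenspace (lift_mat M) (to_ac c)) = vec.dim (eigenspace M c)"
  unfolding eigenspace_eq_kernel using dim_kernel_lift_mat[of "M - mat c"]
  by (simp add: lift_mat_diff lift_mat_mat)

lemma lift_vec_in_eigenspace:
  "v \<in> eigenspace M c \<Longrightarrow> lift_vec v \<in> eigenspace (lift_mat M) (to_ac c)"
  by (simp add: eigenspace_def lift_mat_vector_mult lift_vec_scale)

text \<open>A basis of an eigenspace lifts to a basis of the corresponding eigenspace over the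
  algebraic closure, so a vector orthogonal to the former is orthogonal to the latter.\<close>

lemma nondegenerate_eigenspace_of_lift:
  fixes M N :: "'a::field^'n^'n"
  assumes lifted: "\<forall>x\<in>eigenspace (lift_mat M) (to_ac c). x \<noteq> 0 \<longrightarrow>
      (\<exists>y\<in>eigenspace (lift_mat M) (to_ac c). bilin (lift_mat N) x y \<noteq> 0)"
    and u: "u \<in> eigenspace M c" and orth: "\<forall>v\<in>eigenspace M c. bilin N u v = 0"
  shows "u = 0"
proof -
  obtain S where S: "S \<subseteq> eigenspace M c" "vec.independent S" "card S = vec.dim (eigenspace M c)"
    using vec.basis_exists by metis
  let ?V = "eigenspace (lift_mat M) (to_ac c)"
  have "card (lift_vec ` S) = vec.dim ?V"
    using card_image[OF inj_on_subset[OF inj_lift_vec subset_UNIV]] S(3) dim_eigenspace_lift_mat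
    by metis
  hence span: "?V \<subseteq> vec.span (lift_vec ` S)"
    using vec.card_eq_dim[of "lift_vec ` S" ?V] S(1,2) lift_vec_in_eigenspace
      independent_lift_vec_image vec.finiteI_independent by blast
  have "lift_vec ` S \<subseteq> {y. bilin (lift_mat N) (lift_vec u) y = 0}"
    using S(1) orth by (auto simp: bilin_lift)
  hence "?V \<subseteq> {y. bilin (lift_mat N) (lift_vec u) y = 0}"
    using span vec.span_minimal[OF _ subspace_bilin_kernel] by blast
  hence "lift_vec u = 0" using lifted lift_vec_in_eigenspace[OF u] by blast
  thus ?thesis by simp
qed

definition coord_subspace :: "'n set \<Rightarrow> ('k::field^'n) set" where
  "coord_subspace S = {y. \<forall>i. i \<notin> S \<longrightarrow> y$i = 0}"

lemma axis_in_coord_subspace: "i \<in> S \<Longrightarrow> axis i 1 \<in> coord_subspace S"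
  by (simp add: coord_subspace_def axis_def)

lemma dim_coord_subspace: "vec.dim (coord_subspace S :: ('k::field^'n) set) = card S"
proof -
  let ?A = "(\<lambda>i. axis i (1::'k)) ` S"
  have ind: "vec.independent ?A"
    by (rule vec.independent_mono[OF independent_cart_basis]) (auto simp: cart_basis_def)
  have sub: "?A \<subseteq> coord_subspace S" using axis_in_coord_subspace by blast
  have "coord_subspace S \<subseteq> vec.span ?A"
  proof
    fix y :: "'k^'n" assume y: "y \<in> coord_subspace S"
    have "y = (\<Sum>i\<in>S. y$i *s axis i 1)"
      using y by (auto simp: vec_eq_iff sum_component axis_def coord_subspace_def
          if_distrib[of "\<lambda>x. _ * x"] cong: if_cong)
    also have "\<dots> \<in> vec.span ?A" by (intro vec.span_sum vec.span_scale vec.span_base) auto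
    finally show "y \<in> vec.span ?A" .
  qed
  moreover have "card ?A = card S" by (rule card_image) (auto simp: inj_on_def axis_eq_axis)
  ultimately show ?thesis using vec.basis_card_eq_dim[OF sub _ ind] by simp
qed

lemma diagonal_mat_vector_mult:
  assumes "diagonal_mat D" shows "(D *v y)$i = D$i$i * y$i"
proof -
  have "(D *v y)$i = (\<Sum>k\<in>UNIV. D$i$k * y$k)" by (simp add: matrix_vector_mult_def)
  also have "\<dots> = (\<Sum>k\<in>UNIV. if k = i then D$i$i * y$i else 0)"
    by (rule sum.cong) (use assms in \<open>auto simp: diagonal_mat_def\<close>)
  finally show ?thesis by simp
qed

lemma diagonal_mat_mult_left:
  assumes "diagonal_mat D" shows "(D ** Y)$i$j = D$i$i * Y$i$j"
proof -
  have "(D ** Y)$i$j = (\<Sum>k\<in>UNIV. D$i$k * Y$k$j)" by (simp add: matrix_matrix_mult_def)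
  also have "\<dots> = (\<Sum>k\<in>UNIV. if k = i then D$i$i * Y$i$j else 0)"
    by (rule sum.cong) (use assms in \<open>auto simp: diagonal_mat_def\<close>)
  finally show ?thesis by simp
qed

lemma diagonal_mat_mult_right:
  assumes "diagonal_mat D" shows "(Y ** D)$i$j = Y$i$j * D$j$j"
proof -
  have "(Y ** D)$i$j = (\<Sum>k\<in>UNIV. Y$i$k * D$k$j)" by (simp add: matrix_matrix_mult_def)
  also have "\<dots> = (\<Sum>k\<in>UNIV. if k = j then Y$i$j * D$j$j else 0)"
    by (rule sum.cong) (use assms in \<open>auto simp: diagonal_mat_def\<close>)
  finally show ?thesis by simp
qed

lemma transpose_diagonal_mat: "diagonal_mat D \<Longrightarrow> transpose D = D"
  unfolding diagonal_mat_def transpose_def vec_eq_iff by (metis vec_lambda_beta)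

lemma eigenspace_diagonal_mat: "diagonal_mat D \<Longrightarrow> eigenspace D c = coord_subspace {i. D$i$i = c}"
  by (auto simp: eigenspace_def coord_subspace_def vec_eq_iff diagonal_mat_vector_mult)

lemma eigenspace_conjugate:
  fixes P D :: "'k::field^'n^'n"
  assumes "invertible P"
  shows "eigenspace (P ** D ** matrix_inv P) c = (*v) P ` eigenspace D c"
proof -
  note inv = matrix_mul_matrix_inv[OF assms]
  have cancel: "P *v (matrix_inv P *v x) = x" "matrix_inv P *v (P *v x) = x" for x
    by (simp_all add: matrix_vector_mul_assoc inv)
  have iff: "x \<in> eigenspace (P ** D ** matrix_inv P) c \<longleftrightarrow> matrix_inv P *v x \<in> eigenspace D c" for x
  proof -
    have "(P ** D ** matrix_inv P) *v x = c *s x \<longleftrightarrow>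
        matrix_inv P *v ((P ** D ** matrix_inv P) *v x) = matrix_inv P *v (c *s x)"
      by (metis cancel(1))
    thus ?thesis
      by (simp add: eigenspace_def matrix_vector_mul_assoc matrix_mul_assoc inv vec.scale
          flip: matrix_mul_assoc[of "matrix_inv P" P])
  qed
  show ?thesis
  proof (intro subset_antisym subsetI)
    fix x assume "x \<in> eigenspace (P ** D ** matrix_inv P) c"
    hence "matrix_inv P *v x \<in> eigenspace D c" using iff by blast
    moreover have "x = P *v (matrix_inv P *v x)" using cancel(1) by simp
    ultimately show "x \<in> (*v) P ` eigenspace D c" by blast
  next
    fix x assume "x \<in> (*v) P ` eigenspace D c"
    thus "x \<in> eigenspace (P ** D ** matrix_inv P) c" using iff cancel(2) by auto
  qed
qed

lemma dim_eigenspace_conjugate: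
  fixes P D :: "'k::field^'n^'n"
  assumes P: "invertible P" and D: "diagonal_mat D"
  shows "vec.dim (eigenspace (P ** D ** matrix_inv P) c) = card {i. D$i$i = c}"
proof -
  have "vec.dim ((*v) P ` eigenspace D c) = vec.dim (eigenspace D c)"
    by (rule vec.dim_image_eq[OF matrix_vector_mul_linear_gen])
       (use inj_matrix_vector_mult[OF P] in \<open>auto simp: inj_on_def\<close>)
  thus ?thesis using eigenspace_conjugate[OF P] eigenspace_diagonal_mat[OF D] dim_coord_subspace
    by metis
qed

text \<open>In the eigenbasis formed by the columns of P, the form B only pairs coordinates belonging to an
  eigenvalue with coordinates belonging to its inverse.\<close>

locale diagonalized_isometry =
  fixes B P D :: "'k::field^'n^'n"
  assumes invertible_B: "invertible B" and invertible_P: "invertible P"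
    and diagonal_D: "diagonal_mat D"
    and isometry: "transpose (P ** D ** matrix_inv P) ** B ** (P ** D ** matrix_inv P) = B"
begin

definition gram :: "'k^'n^'n" where
  "gram = transpose P ** B ** P"

lemma invertible_gram: "invertible gram"
proof -
  have "invertible (transpose P)"
    using invertible_P by (simp add: invertible_det_nz)
  thus ?thesis unfolding gram_def by (intro invertible_mult invertible_B invertible_P)
qed

lemma diagonal_gram_diagonal: "D ** gram ** D = gram"
proof -
  note inv = matrix_mul_matrix_inv[OF invertible_P]
  have left: "transpose P ** transpose (matrix_inv P) = mat 1"
    using inv(2) by (metis matrix_transpose_mul transpose_mat)
  have right: "Y ** matrix_inv P ** P = Y" for Y :: "'k^'n^'n"
    by (metis matrix_mul_assoc inv(2) matrix_mul_rid)
  have "transpose P ** (transpose (P ** D ** matrix_inv P) ** B ** (P ** D ** matrix_inv P)) ** P = gram"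
    using isometry by (simp add: gram_def)
  thus ?thesis
    by (simp add: gram_def matrix_mul_assoc matrix_transpose_mul transpose_diagonal_mat[OF diagonal_D]
        left right matrix_mul_lid)
qed

lemma gram_nonzero_entry:
  assumes "gram$i$j \<noteq> 0" shows "D$i$i * D$j$j = 1"
proof -
  have "gram$i$j = D$i$i * gram$i$j * D$j$j"
    using arg_cong[OF diagonal_gram_diagonal, of "\<lambda>M. M$i$j"]
    by (simp add: diagonal_mat_mult_left[OF diagonal_D] diagonal_mat_mult_right[OF diagonal_D])
  hence "gram$i$j * (D$i$i * D$j$j) = gram$i$j * 1" by (simp add: mult_ac)
  thus ?thesis using assms by (metis mult_left_cancel)
qed

lemma gram_maps_eigencoordinates:
  assumes y: "y \<in> coord_subspace {i. D$i$i = c}" and c: "c \<noteq> 0"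
  shows "gram *v y \<in> coord_subspace {i. D$i$i = inverse c}"
  unfolding coord_subspace_def
proof (intro CollectI allI impI)
  fix i assume i: "i \<notin> {i. D$i$i = inverse c}"
  have "gram$i$j * y$j = 0" for j
  proof (rule ccontr)
    assume "gram$i$j * y$j \<noteq> 0"
    hence "D$i$i * D$j$j = 1" "D$j$j = c"
      using gram_nonzero_entry y by (auto simp: coord_subspace_def)
    hence "D$i$i = inverse c" using c by (simp add: field_simps)
    thus False using i by simp
  qed
  thus "(gram *v y)$i = 0" unfolding matrix_vector_mult_def by (simp add: sum.neutral)
qed

lemma card_eigenvalue_le_inverse:
  assumes "c \<noteq> 0" shows "card {i. D$i$i = c} \<le> card {i. D$i$i = inverse c}"
proof -
  let ?E = "\<lambda>c. coord_subspace {i. D$i$i = c} :: ('k^'n) set"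
  have "card {i. D$i$i = c} = vec.dim (?E c)" by (simp add: dim_coord_subspace)
  also have "\<dots> = vec.dim ((*v) gram ` ?E c)"
    by (rule vec.dim_image_eq[OF matrix_vector_mul_linear_gen, symmetric])
       (use inj_matrix_vector_mult[OF invertible_gram] in \<open>auto simp: inj_on_def\<close>)
  also have "\<dots> \<le> vec.dim (?E (inverse c))"
    using gram_maps_eigencoordinates[OF _ assms] by (intro vec.dim_subset) blast
  finally show ?thesis by (simp add: dim_coord_subspace)
qed

lemma card_eigenvalue_eq_inverse:
  "c \<noteq> 0 \<Longrightarrow> card {i. D$i$i = c} = card {i. D$i$i = inverse c}"
  using card_eigenvalue_le_inverse[of c] card_eigenvalue_le_inverse[of "inverse c"] by simp

lemma eigenspace_nondegenerate:
  assumes c: "c * c = 1" and x: "x \<in> eigenspace (P ** D ** matrix_inv P) c" "x \<noteq> 0"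
  shows "\<exists>y\<in>eigenspace (P ** D ** matrix_inv P) c. bilin B x y \<noteq> 0"
proof -
  obtain z where z: "x = P *v z" "z \<in> coord_subspace {i. D$i$i = c}"
    using x(1) eigenspace_conjugate[OF invertible_P] eigenspace_diagonal_mat[OF diagonal_D] by auto
  have "z \<noteq> 0" using x(2) z(1) by auto
  moreover have "invertible (transpose gram)"
    using invertible_gram by (simp add: invertible_det_nz)
  ultimately have "transpose gram *v z \<noteq> 0"
    using matrix_left_invertible_ker invertible_left_inverse by blast
  then obtain j where j: "(transpose gram *v z)$j \<noteq> 0" by (metis vec_eq_iff zero_index)
  hence "(\<Sum>i\<in>UNIV. z$i * gram$i$j) \<noteq> 0"
    by (simp add: matrix_vector_mult_def transpose_def mult.commute)
  then obtain i where "z$i * gram$i$j \<noteq> 0" by (meson sum.neutral)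
  hence "D$i$i = c" "D$i$i * D$j$j = 1"
    using z(2) gram_nonzero_entry by (auto simp: coord_subspace_def)
  hence "D$j$j = c" using c by (metis mult.commute mult_left_cancel one_neq_zero mult_zero_left)
  hence "P *v axis j 1 \<in> eigenspace (P ** D ** matrix_inv P) c"
    using eigenspace_conjugate[OF invertible_P] eigenspace_diagonal_mat[OF diagonal_D]
      axis_in_coord_subspace[of j "{i. D$i$i = c}"] by auto
  moreover have "bilin B x (P *v axis j 1) = (transpose gram *v z)$j"
    by (simp add: z(1) bilin_matrix_vector_mult bilin_axis_right gram_def)
  ultimately show ?thesis using j by (intro bexI[of _ "P *v axis j 1"]) simp_all
qed

end

section \<open>Eichler transformations\<close>

text \<open>For an isotropic vector e and a vector w orthogonal to e, the Eichler transformation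
  x \<mapsto> x + B(e,x) w - (B(w,x) + Q(w) B(e,x)) e with Q(w) = B(w,w)/2 is a unipotent isometry of B.
  Scaling by a parameter t turns it into a one-parameter group.\<close>

locale eichler_pair =
  fixes B :: "'k::field^'n^'n" and e w :: "'k^'n"
  assumes symmetric: "transpose B = B" and isotropic: "bilin B e e = 0"
    and orthogonal: "bilin B e w = 0" and two_nonzero: "(2::'k) \<noteq> 0"
begin

definition quad_w :: 'k where
  "quad_w = bilin B w w / 2"

definition eichler :: "'k \<Rightarrow> 'k^'n \<Rightarrow> 'k^'n" where
  "eichler t x = x + (t * bilin B e x) *s w - (t * bilin B w x + t * t * quad_w * bilin B e x) *s e"

definition eichler_mat :: "'k \<Rightarrow> 'k^'n^'n" where
  "eichler_mat t = (\<chi> i j. (if i = j then 1 else 0) + t * w$i * (B *v e)$j - t * e$i * (B *v w)$j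
                 - t * t * quad_w * e$i * (B *v e)$j)"

lemma bilin_eq_sum: "bilin B u x = (\<Sum>j\<in>UNIV. (B *v u)$j * x$j)"
  using bilin_commute[OF symmetric, of u x] unfolding bilin_def by (simp add: mult.commute)

lemma eichler_mat_vector_mult: "eichler_mat t *v x = eichler t x"
proof (subst vec_eq_iff, intro allI)
  fix i
  have "(eichler_mat t *v x)$i = (\<Sum>j\<in>UNIV. (if i = j then x$j else 0) + t * w$i * ((B *v e)$j * x$j)
        - t * e$i * ((B *v w)$j * x$j) - t * t * quad_w * e$i * ((B *v e)$j * x$j))"
    unfolding matrix_vector_mult_def[of "eichler_mat t"]
    by (simp, rule sum.cong[OF refl]) (simp add: eichler_mat_def algebra_simps)
  also have "\<dots> = x$i + t * w$i * (\<Sum>j\<in>UNIV. (B *v e)$j * x$j) - t * e$i * (\<Sum>j\<in>UNIV. (B *v w)$j * x$j)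
        - t * t * quad_w * e$i * (\<Sum>j\<in>UNIV. (B *v e)$j * x$j)"
    by (simp add: sum.distrib sum_subtractf sum_distrib_left)
  also have "\<dots> = eichler t x $ i"
    unfolding eichler_def bilin_eq_sum by (simp add: algebra_simps)
  finally show "(eichler_mat t *v x)$i = eichler t x $ i" .
qed

lemma bilin_w_e: "bilin B w e = 0"
  using orthogonal bilin_commute[OF symmetric] by metis

lemma bilin_w_w: "bilin B w w = 2 * quad_w"
  using two_nonzero by (simp add: quad_w_def)

lemma bilin_eichler: "bilin B (eichler t x) (eichler t y) = bilin B x y"
proof -
  let ?a = "\<lambda>x. t * bilin B e x" and ?b = "\<lambda>x. t * bilin B w x + t * t * quad_w * bilin B e x"
  have "bilin B (eichler t x) (eichler t y) = bilin B x y + ?a y * bilin B x w - ?b y * bilin B x e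
     + ?a x * bilin B w y + ?a x * ?a y * bilin B w w - ?a x * ?b y * bilin B w e
     - ?b x * bilin B e y - ?b x * ?a y * bilin B e w + ?b x * ?b y * bilin B e e"
    unfolding eichler_def by (simp add: bilin_linear algebra_simps)
  also have "\<dots> = bilin B x y"
    using isotropic orthogonal bilin_w_e bilin_w_w bilin_commute[OF symmetric, of x]
    by (simp add: algebra_simps)
  finally show ?thesis .
qed

lemma bilin_e_eichler: "bilin B e (eichler t x) = bilin B e x"
  unfolding eichler_def using isotropic orthogonal by (simp add: bilin_linear)

lemma bilin_w_eichler: "bilin B w (eichler t x) = bilin B w x + 2 * quad_w * t * bilin B e x"
  unfolding eichler_def using bilin_w_e bilin_w_w by (simp add: bilin_linear algebra_simps)

lemma eichler_eichler: "eichler s (eichler t x) = eichler (s + t) x"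
  unfolding eichler_def[of s "eichler t x"] bilin_e_eichler bilin_w_eichler
  by (simp add: eichler_def vec_eq_iff algebra_simps)

lemma eichler_mat_mult: "eichler_mat s ** eichler_mat t = eichler_mat (s + t)"
  unfolding matrix_eq
  by (simp add: matrix_vector_mul_assoc[symmetric] eichler_mat_vector_mult eichler_eichler)

lemma eichler_mat_isometry: "transpose (eichler_mat t) ** B ** eichler_mat t = B"
  by (rule bilin_inject)
    (simp add: bilin_matrix_vector_mult[symmetric] eichler_mat_vector_mult bilin_eichler)

text \<open>An isometry of a nondegenerate form has determinant \<open>\<plusminus>1\<close>, and
  eichler_mat 1 is the square of eichler_mat (1/2).\<close>

lemma det_eichler_mat_1:
  assumes "invertible B" shows "det (eichler_mat 1) = 1"
proof -
  have square_1: "det (eichler_mat t) * det (eichler_mat t) = 1" for t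
  proof -
    have "det B * (det (eichler_mat t) * det (eichler_mat t)) = det B * 1"
      using arg_cong[OF eichler_mat_isometry[of t], of det] by (simp add: det_mul mult_ac)
    moreover have "det B \<noteq> 0" using assms by (simp add: invertible_det_nz)
    ultimately show ?thesis by (metis mult_left_cancel)
  qed
  have "eichler_mat 1 = eichler_mat (1/2) ** eichler_mat (1/2)"
    using eichler_mat_mult[of "1/2" "1/2"] two_nonzero by simp
  thus ?thesis using square_1[of "1/2"] by (simp add: det_mul)
qed

lemma eichler_mat_1_minus_id:
  "(eichler_mat 1 - mat 1) *v x = bilin B e x *s w - (bilin B w x + quad_w * bilin B e x) *s e"
  by (simp add: matrix_vector_mult_diff_rdistrib eichler_mat_vector_mult mat_vector_mult eichler_def
      vec_eq_iff algebra_simps)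

lemma unipotent_eichler_mat_1: "unipotent (eichler_mat 1)"
proof -
  let ?N = "\<lambda>x. (eichler_mat 1 - mat 1) *v x"
  have "bilin B e (?N x) = 0" "bilin B w (?N x) = 2 * quad_w * bilin B e x" for x
    unfolding eichler_mat_1_minus_id using isotropic orthogonal bilin_w_e bilin_w_w
    by (simp_all add: bilin_linear algebra_simps)
  hence "?N (?N x) = (- (2 * quad_w * bilin B e x)) *s e" for x
    unfolding eichler_mat_1_minus_id[of "?N x"] by (simp add: vec_eq_iff algebra_simps)
  moreover have "?N (c *s e) = 0" for c
    unfolding eichler_mat_1_minus_id using isotropic bilin_w_e by (simp add: bilin_linear)
  ultimately have "?N (?N (?N x)) = 0" for x by (metis (no_types))
  hence "(eichler_mat 1 - mat 1) ** ((eichler_mat 1 - mat 1) ** ((eichler_mat 1 - mat 1) ** mat 1)) = 0"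
    unfolding matrix_eq by (simp add: matrix_vector_mul_assoc[symmetric])
  hence "(((**) (eichler_mat 1 - mat 1)) ^^ 3) (mat 1) = 0" by (simp add: numeral_3_eq_3)
  thus ?thesis unfolding unipotent_def by blast
qed

lemma eichler_mat_commute:
  assumes iso: "transpose g ** B ** g = B" and ge: "g *v e = c *s e" and gw: "g *v w = c *s w"
    and cc: "c * c = 1"
  shows "g ** eichler_mat t = eichler_mat t ** g"
proof -
  have bilin_g: "bilin B (g *v u) (g *v v) = bilin B u v" for u v
    using iso by (simp add: bilin_matrix_vector_mult)
  have "e = c *s (g *v e)" "w = c *s (g *v w)" using ge gw cc by (simp_all add: vec.scale_scale)
  hence "bilin B e (g *v x) = c * bilin B e x" "bilin B w (g *v x) = c * bilin B w x" for x
    by (metis bilin_scale_left bilin_g)+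
  hence "g *v eichler t x = eichler t (g *v x)" for x
    unfolding eichler_def
    by (simp add: matrix_vector_right_distrib matrix_vector_mult_diff_distrib vec.scale ge gw
        vec.scale_scale algebra_simps)
  thus ?thesis unfolding matrix_eq
    by (simp add: matrix_vector_mul_assoc[symmetric] eichler_mat_vector_mult)
qed

lemma eichler_mat_1_neq_id:
  assumes "invertible B" and "e \<noteq> 0" and "w \<notin> vec.span {e}"
  shows "eichler_mat 1 \<noteq> mat 1"
proof
  assume E: "eichler_mat 1 = mat 1"
  have "B *v e \<noteq> 0" using inj_matrix_vector_mult[OF assms(1)] assms(2)
    by (metis injD matrix_vector_mult_0_right)
  then obtain j where j: "(B *v e)$j \<noteq> 0" by (metis vec_eq_iff zero_index)
  let ?x = "axis j (1::'k)"
  have ex: "bilin B e ?x \<noteq> 0" using j bilin_axis_right[of B e j] symmetric by simp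
  have "bilin B e ?x *s w = (bilin B w ?x + quad_w * bilin B e ?x) *s e"
    using E eichler_mat_1_minus_id[of ?x] by simp
  hence "w = ((bilin B w ?x + quad_w * bilin B e ?x) / bilin B e ?x) *s e"
    using ex by (metis (no_types, lifting) divide_inverse_commute vec.scale_scale vector_smult_lid
        right_inverse mult.commute)
  thus False using assms(3) by (metis vec.span_base vec.span_scale singletonI)
qed

end

section \<open>Large (+1)- or (-1)-eigenspaces contradict regularity\<close>

lemma obtain_independent_pair:
  fixes V :: "('k::field^'n) set"
  assumes "vec.dim V \<ge> 2"
  obtains x y where "x \<in> V" "y \<in> V" "x \<noteq> y" "vec.independent {x, y}"
proof -
  obtain S where S: "S \<subseteq> V" "vec.independent S" "card S = vec.dim V"
    using vec.basis_exists by metis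
  obtain T where T: "T \<subseteq> S" "card T = 2"
    using obtain_subset_with_card_n[of 2 S] assms S(3) by auto
  then obtain x y where "T = {x, y}" "x \<noteq> y" by (auto simp: card_2_iff)
  thus ?thesis using that S(1,2) T(1) vec.independent_mono by blast
qed

lemma not_in_span_of_independent_pair:
  assumes "vec.independent {x, y}" "x \<noteq> y"
  shows "x \<notin> vec.span {y}"
proof
  assume "x \<in> vec.span {y}"
  hence "x \<in> vec.span ({x, y} - {x})" using assms(2) by (simp add: insert_Diff_if)
  thus False using assms(1) unfolding vec.dependent_def by blast
qed

lemma dim_le_Suc_dim_Int_orthogonal:
  fixes V :: "('k::field^'n) set"
  assumes V: "vec.subspace V"
  shows "vec.dim V \<le> vec.dim (V \<inter> {x. bilin B e x = 0}) + 1"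
proof (cases "\<forall>x\<in>V. bilin B e x = 0")
  case True
  hence "V \<inter> {x. bilin B e x = 0} = V" by auto
  thus ?thesis by simp
next
  case False
  then obtain z where z: "z \<in> V" "bilin B e z \<noteq> 0" by blast
  let ?W = "V \<inter> {x. bilin B e x = 0}"
  have "V \<subseteq> {a + b |a b. a \<in> ?W \<and> b \<in> vec.span {z}}"
  proof
    fix x assume x: "x \<in> V"
    let ?k = "bilin B e x / bilin B e z"
    have "x - ?k *s z \<in> ?W"
      using x z V by (auto simp: bilin_diff_right bilin_scale_right vec.subspace_diff vec.subspace_scale)
    moreover have "?k *s z \<in> vec.span {z}" by (simp add: vec.span_scale vec.span_base)
    ultimately show "x \<in> {a + b |a b. a \<in> ?W \<and> b \<in> vec.span {z}}"
      by (metis (mono_tags, lifting) diff_add_cancel mem_Collect_eq)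
  qed
  hence "vec.dim V \<le> vec.dim {a + b |a b. a \<in> ?W \<and> b \<in> vec.span {z}}" by (rule vec.dim_subset)
  also have "\<dots> \<le> vec.dim ?W + vec.dim (vec.span {z})"
    using vec.dim_sums_Int[OF vec.subspace_inter[OF V subspace_bilin_kernel[of B e]] vec.subspace_span[of "{z}"]]
    by simp
  also have "vec.dim (vec.span {z}) \<le> 1"
    using vec.dim_le_card[of "vec.span {z}" "{z}"] by (simp add: vec.span_span)
  finally show ?thesis by simp
qed

lemma obtain_isotropic_vector:
  fixes B :: "'k::alg_closed_field^'n^'n"
  assumes "transpose B = B" and V: "vec.subspace V" "vec.dim V \<ge> 2"
  obtains e where "e \<in> V" "e \<noteq> 0" "bilin B e e = 0"
proof -
  obtain x y where xy: "x \<in> V" "y \<in> V" "x \<noteq> y" "vec.independent {x, y}"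
    using obtain_independent_pair V(2) by metis
  have "y \<noteq> 0" using xy(4) vec.dependent_zero by blast
  show ?thesis
  proof (cases "bilin B y y = 0")
    case True thus ?thesis using that xy \<open>y \<noteq> 0\<close> by blast
  next
    case False
    define f where "f k = (if k = 0 then bilin B x x else if k = 1 then 2 * bilin B x y else bilin B y y)"
      for k :: nat
    obtain t where "(\<Sum>k\<le>2. f k * t ^ k) = 0"
      using alg_closed[of 2 f] False by (auto simp: f_def)
    hence t: "bilin B x x + 2 * bilin B x y * t + bilin B y y * t^2 = 0"
      by (simp add: f_def numeral_2_eq_2 atMost_Suc algebra_simps power2_eq_square)
    let ?e = "x + t *s y"
    have "bilin B ?e ?e = bilin B x x + 2 * bilin B x y * t + bilin B y y * t^2"
      using bilin_commute[OF assms(1), of y x]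
      by (simp add: bilin_linear algebra_simps power2_eq_square)
    moreover have "?e \<in> V" using xy V by (simp add: vec.subspace_add vec.subspace_scale)
    moreover have "?e \<noteq> 0"
    proof
      assume "?e = 0"
      hence "x = (- t) *s y" by (simp add: eq_neg_iff_add_eq_0 vec.scale_minus_left)
      hence "x \<in> vec.span {y}" by (metis vec.span_scale vec.span_base singletonI)
      thus False using not_in_span_of_independent_pair xy(3,4) by blast
    qed
    ultimately show ?thesis using that t by auto
  qed
qed

lemma obtain_orthogonal_vector_off_line:
  fixes V :: "('k::field^'n) set"
  assumes V: "vec.subspace V" "vec.dim V \<ge> 3"
  obtains w where "w \<in> V" "bilin B e w = 0" "w \<notin> vec.span {e}"
proof -
  let ?W = "V \<inter> {x. bilin B e x = 0}"
  have "vec.dim ?W \<ge> 2" using dim_le_Suc_dim_Int_orthogonal[OF V(1), of B e] V(2) by simp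
  then obtain w1 w2 where ws: "w1 \<in> ?W" "w2 \<in> ?W" "w1 \<noteq> w2" "vec.independent {w1, w2}"
    using obtain_independent_pair by metis
  have "\<not> (w1 \<in> vec.span {e} \<and> w2 \<in> vec.span {e})"
  proof
    assume "w1 \<in> vec.span {e} \<and> w2 \<in> vec.span {e}"
    hence "card {w1, w2} \<le> vec.dim (vec.span {e})"
      using vec.independent_card_le_dim[of "{w1, w2}" "vec.span {e}"] ws(4) by auto
    also have "\<dots> \<le> 1"
      using vec.dim_le_card[of "vec.span {e}" "{e}"] by (simp add: vec.span_span)
    finally show False using ws(3) by simp
  qed
  thus ?thesis using that ws by blast
qed

lemma unipotent_commuting_of_large_eigenspace:
  fixes g B :: "'k::alg_closed_field^'n^'n"
  assumes symB: "transpose B = B" and invB: "invertible B" and two: "(2::'k) \<noteq> 0"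
    and iso: "transpose g ** B ** g = B" and cc: "c * c = 1"
    and dim: "vec.dim (eigenspace g c) \<ge> 3"
  obtains u where "unipotent u" "u ** g = g ** u" "u \<noteq> mat 1" "det u = 1"
    "transpose u ** B ** u = B"
proof -
  let ?V = "eigenspace g c"
  have "vec.dim ?V \<ge> 2" using dim by simp
  then obtain e where e: "e \<in> ?V" "e \<noteq> 0" "bilin B e e = 0"
    using obtain_isotropic_vector[OF symB subspace_eigenspace] by blast
  obtain w where w: "w \<in> ?V" "bilin B e w = 0" "w \<notin> vec.span {e}"
    using obtain_orthogonal_vector_off_line[OF subspace_eigenspace dim] by blast
  interpret E: eichler_pair B e w
    by unfold_locales (use symB e w two in auto)
  have "g *v e = c *s e" "g *v w = c *s w" using e(1) w(1) by (auto simp: eigenspace_def)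
  show ?thesis
  proof (rule that)
    show "E.eichler_mat 1 ** g = g ** E.eichler_mat 1"
      using E.eichler_mat_commute[OF iso \<open>g *v e = c *s e\<close> \<open>g *v w = c *s w\<close> cc] by simp
  qed (use E.unipotent_eichler_mat_1 E.eichler_mat_1_neq_id[OF invB e(2) w(3)]
      E.det_eichler_mat_1[OF invB] E.eichler_mat_isometry in auto)
qed

section \<open>Counting eigenvalues of a diagonalizable isometry of determinant 1\<close>

lemma even_sum_and_prod_one_of_inverse_pairs:
  fixes L :: "'k::field set" and m :: "'k \<Rightarrow> nat"
  assumes "finite L" "\<forall>x\<in>L. inverse x \<in> L \<and> inverse x \<noteq> x \<and> m (inverse x) = m x \<and> x \<noteq> 0"
  shows "even (\<Sum>x\<in>L. m x) \<and> (\<Prod>x\<in>L. x ^ m x) = 1"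
  using assms
proof (induction "card L" arbitrary: L rule: less_induct)
  case less
  show ?case
  proof (cases "L = {}")
    case True thus ?thesis by simp
  next
    case False
    then obtain x where x: "x \<in> L" by blast
    let ?L = "L - {x, inverse x}"
    have x_props: "inverse x \<in> L" "inverse x \<noteq> x" "m (inverse x) = m x" "x \<noteq> 0"
      using less.prems x by auto
    have "inverse y \<in> ?L \<and> inverse y \<noteq> y \<and> m (inverse y) = m y \<and> y \<noteq> 0" if y: "y \<in> ?L" for y
    proof -
      have "inverse y \<noteq> x" using y by (metis DiffD2 inverse_inverse_eq insertCI)
      thus ?thesis using less.prems y by auto
    qed
    moreover have "card ?L < card L"
      using less.prems(1) x x_props(1) by (intro psubset_card_mono) auto
    ultimately have IH: "even (\<Sum>y\<in>?L. m y) \<and> (\<Prod>y\<in>?L. y ^ m y) = 1"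
      using less.hyps less.prems(1) by blast
    have split: "L = insert x (insert (inverse x) ?L)" using x x_props(1) by auto
    have "(\<Sum>y\<in>L. m y) = m x + m (inverse x) + (\<Sum>y\<in>?L. m y)"
      by (subst split) (use less.prems(1) x_props(2) in simp)
    moreover have "(\<Prod>y\<in>L. y ^ m y) = x ^ m x * (inverse x) ^ m (inverse x) * (\<Prod>y\<in>?L. y ^ m y)"
      by (subst split) (use less.prems(1) x_props(2) in simp)
    moreover have "x ^ m x * (inverse x) ^ m x = 1"
      using x_props(4) by (simp add: power_inverse[symmetric] field_simps)
    ultimately show ?thesis using IH x_props(3) by simp
  qed
qed

lemma eigenvalues_off_plus_minus_one_pair_up:
  fixes d :: "'n::finite \<Rightarrow> 'k::field"
  assumes nonzero: "\<And>i. d i \<noteq> 0"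
    and pairing: "\<And>c. c \<noteq> 0 \<Longrightarrow> card {i. d i = c} = card {i. d i = inverse c}"
  shows "even (card {i. d i \<noteq> 1 \<and> d i \<noteq> -1}) \<and> (\<Prod>i\<in>{i. d i \<noteq> 1 \<and> d i \<noteq> -1}. d i) = 1"
proof -
  let ?T = "{i. d i \<noteq> 1 \<and> d i \<noteq> -1}" and ?m = "\<lambda>c. card {i. d i = c}"
  have m_T: "?m c = card {i \<in> ?T. d i = c}" if "c \<in> d ` ?T" for c
    using that by (intro arg_cong[where f=card]) auto
  have "inverse c \<in> d ` ?T \<and> inverse c \<noteq> c \<and> ?m (inverse c) = ?m c \<and> c \<noteq> 0"
    if c: "c \<in> d ` ?T" for c
  proof -
    have c_props: "c \<noteq> 0" "c \<noteq> 1" "c \<noteq> -1" using c nonzero by auto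
    have m_inv: "?m (inverse c) = ?m c" using pairing[OF c_props(1)] by simp
    have "?m c > 0" using c by (auto simp: card_gt_0_iff)
    hence "{i. d i = inverse c} \<noteq> {}" using m_inv by (metis card.empty less_irrefl)
    then obtain i where i: "d i = inverse c" by blast
    have "inverse c \<noteq> 1" "inverse c \<noteq> -1" using c_props
      by (metis inverse_1 inverse_inverse_eq, metis inverse_minus_eq inverse_1 inverse_inverse_eq)
    hence "inverse c \<in> d ` ?T" using i by (metis (mono_tags, lifting) image_eqI mem_Collect_eq)
    moreover have "inverse c \<noteq> c"
    proof
      assume "inverse c = c"
      hence "c * c = 1" using c_props(1) by (metis right_inverse)
      thus False using c_props square_eq_1_iff by blast
    qed
    ultimately show ?thesis using c_props(1) m_inv by blast
  qed
  hence pairs: "even (\<Sum>c\<in>d ` ?T. ?m c) \<and> (\<Prod>c\<in>d ` ?T. c ^ ?m c) = 1"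
    by (intro even_sum_and_prod_one_of_inverse_pairs) auto
  have "card ?T = (\<Sum>i\<in>?T. 1)" by simp
  also have "\<dots> = (\<Sum>c\<in>d ` ?T. \<Sum>i\<in>{i \<in> ?T. d i = c}. 1)"
    by (rule sum.group[symmetric]) auto
  also have "\<dots> = (\<Sum>c\<in>d ` ?T. ?m c)" using m_T by (intro sum.cong) auto
  finally have "card ?T = (\<Sum>c\<in>d ` ?T. ?m c)" .
  moreover have "(\<Prod>i\<in>?T. d i) = (\<Prod>c\<in>d ` ?T. \<Prod>i\<in>{i \<in> ?T. d i = c}. d i)"
    by (rule prod.group[symmetric]) auto
  moreover have "\<dots> = (\<Prod>c\<in>d ` ?T. c ^ ?m c)"
  proof (rule prod.cong[OF refl])
    fix c assume "c \<in> d ` ?T"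
    hence "(\<Prod>i\<in>{i \<in> ?T. d i = c}. d i) = (\<Prod>i\<in>{i \<in> ?T. d i = c}. c) \<and> ?m c = card {i \<in> ?T. d i = c}"
      using m_T by (auto intro: prod.cong)
    thus "(\<Prod>i\<in>{i \<in> ?T. d i = c}. d i) = c ^ ?m c" by simp
  qed
  ultimately show ?thesis using pairs by simp
qed

lemma even_card_eigenvalue_minus_one:
  fixes d :: "'n::finite \<Rightarrow> 'k::field"
  assumes two: "(2::'k) \<noteq> 0" and prod: "(\<Prod>i\<in>UNIV. d i) = 1"
    and prod_off: "(\<Prod>i\<in>{i. d i \<noteq> 1 \<and> d i \<noteq> -1}. d i) = 1"
  shows "even (card {i. d i = -1})"
proof -
  have one_neq: "1 \<noteq> (-1::'k)" using one_neq_minus_one[OF two] .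
  have U: "(UNIV::'n set) = {i. d i = 1} \<union> ({i. d i = -1} \<union> {i. d i \<noteq> 1 \<and> d i \<noteq> -1})" by auto
  have "(\<Prod>i\<in>UNIV. d i)
      = (\<Prod>i\<in>{i. d i = 1}. d i) * ((\<Prod>i\<in>{i. d i = -1}. d i) * (\<Prod>i\<in>{i. d i \<noteq> 1 \<and> d i \<noteq> -1}. d i))"
    unfolding U using one_neq by (subst prod.union_disjoint; auto)+
  hence "(-1::'k) ^ card {i. d i = -1} = 1" using prod prod_off by simp
  thus ?thesis using one_neq by (metis neg_one_odd_power)
qed

lemma multiplicities_of_one_and_minus_one:
  fixes d :: "'n::finite \<Rightarrow> 'k::field"
  assumes two: "(2::'k) \<noteq> 0"
    and nonzero: "\<And>i. d i \<noteq> 0"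
    and pairing: "\<And>c. c \<noteq> 0 \<Longrightarrow> card {i. d i = c} = card {i. d i = inverse c}"
    and prod: "(\<Prod>i\<in>UNIV. d i) = 1"
    and odd: "odd CARD('n)"
    and bounds: "card {i. d i = 1} \<le> 2" "card {i. d i = -1} \<le> 2"
  shows "card {i. d i = 1} = 1" "card {i. d i = -1} = 0 \<or> card {i. d i = -1} = 2"
proof -
  have off: "even (card {i. d i \<noteq> 1 \<and> d i \<noteq> -1})"
    and minus_one: "even (card {i. d i = -1})"
    using eigenvalues_off_plus_minus_one_pair_up[OF nonzero pairing] even_card_eigenvalue_minus_one[OF two prod]
    by blast+
  have one_neq: "1 \<noteq> (-1::'k)" using one_neq_minus_one[OF two] .
  have U: "(UNIV::'n set) = {i. d i = 1} \<union> ({i. d i = -1} \<union> {i. d i \<noteq> 1 \<and> d i \<noteq> -1})" by auto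
  have "CARD('n) = card {i. d i = 1} + (card {i. d i = -1} + card {i. d i \<noteq> 1 \<and> d i \<noteq> -1})"
    unfolding U using one_neq by (subst card_Un_disjoint; auto)+
  thus "card {i. d i = 1} = 1" using off minus_one odd bounds(1) by presburger
  show "card {i. d i = -1} = 0 \<or> card {i. d i = -1} = 2" using minus_one bounds(2) by presburger
qed

lemma obtain_line_generator:
  fixes L :: "('k::field^'n) set"
  assumes "vec.subspace L" "vec.dim L = 1"
  obtains v where "v \<noteq> 0" "L = vec.span {v}"
proof -
  obtain S where S: "S \<subseteq> L" "vec.independent S" "L \<subseteq> vec.span S" "card S = vec.dim L"
    by (rule vec.basis_exists)
  then obtain v where v: "S = {v}" using assms(2) by (metis card_1_singletonE)
  have "v \<noteq> 0" using S(2) v vec.dependent_zero by blast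
  moreover have "vec.span {v} \<subseteq> L" using S(1) v assms(1) vec.span_minimal by blast
  ultimately show ?thesis using that S(3) v by blast
qed

lemma stable_nondegenerate_line_in_eigenspace:
  fixes A g :: "'k::field^'n^'n"
  assumes iso: "transpose g ** (A + transpose A) ** g = A + transpose A"
    and L: "nondeg_subspace A L" "vec.dim L = 1" "(\<lambda>v. g *v v) ` L = L"
  shows "L \<subseteq> eigenspace g 1 \<or> L \<subseteq> eigenspace g (-1)"
proof -
  have "vec.subspace L" using L(1) by (simp add: nondeg_subspace_def)
  then obtain v where v: "v \<noteq> 0" "L = vec.span {v}"
    using obtain_line_generator L(2) by blast
  have "v \<in> L" using v(2) vec.span_base by blast
  hence "g *v v \<in> vec.span {v}" using L(3) v(2) by blast
  then obtain c where c: "g *v v = c *s v" by (auto simp: vec.span_singleton)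
  obtain u where "u \<in> L" "polar A v u \<noteq> 0"
    using L(1) \<open>v \<in> L\<close> v(1) by (auto simp: nondeg_subspace_def)
  hence vv: "bilin (A + transpose A) v v \<noteq> 0"
    using v(2) by (auto simp: vec.span_singleton polar_eq_bilin bilin_scale_right)
  have "bilin (A + transpose A) (g *v v) (g *v v) = bilin (A + transpose A) v v"
    using iso by (simp add: bilin_matrix_vector_mult)
  hence "(c * c) * bilin (A + transpose A) v v = 1 * bilin (A + transpose A) v v"
    unfolding c by (simp add: bilin_scale_left bilin_scale_right mult_ac)
  hence "c * c = 1" using vv by (metis mult_right_cancel)
  hence "c = 1 \<or> c = -1" by (simp add: square_eq_1_iff)
  moreover have "vec.span {v} \<subseteq> eigenspace g c"
    using c by (intro vec.span_minimal[OF _ subspace_eigenspace]) (simp add: eigenspace_def)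
  ultimately show ?thesis using v(2) by blast
qed

locale regular_semisimple_isometry =
  fixes A g :: "'a::field^'n^'n"
  assumes two_nonzero: "(2::'a) \<noteq> 0" and nondegenerate: "nondegenerate_form A"
    and in_SO: "g \<in> SO A" and regular: "regular_semisimple A g"
begin

abbreviation lifted_form :: "'a alg_closure^'n^'n" where
  "lifted_form \<equiv> lift_mat (A + transpose A)"

lemma lifted_form_eq: "lifted_form = lift_mat A + transpose (lift_mat A)"
  by (simp add: lift_mat_add lift_mat_transpose)

lemma two_nonzero_closure: "(2::'a alg_closure) \<noteq> 0"
  using two_nonzero by (metis to_ac_numeral to_ac_eq_0_iff)

lemma lifted_isometry: "transpose (lift_mat g) ** lifted_form ** lift_mat g = lifted_form"
  using arg_cong[OF SO_isometry[OF in_SO], of lift_mat] by (simp add: lift_mat_mult lift_mat_transpose)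

lemma invertible_lifted_form: "invertible lifted_form"
  using nondegenerate_form_invertible[OF nondegenerate] by (simp add: invertible_lift_mat_iff)

lemma dim_lifted_eigenspace_le_2:
  assumes "c * c = 1" shows "vec.dim (eigenspace (lift_mat g) c) \<le> 2"
proof (rule ccontr)
  assume "\<not> ?thesis"
  hence "vec.dim (eigenspace (lift_mat g) c) \<ge> 3" by simp
  moreover have "transpose lifted_form = lifted_form"
    by (simp add: lifted_form_eq transpose_add_transpose)
  ultimately obtain u where u: "unipotent u" "u ** lift_mat g = lift_mat g ** u" "u \<noteq> mat 1"
    "det u = 1" "transpose u ** lifted_form ** u = lifted_form"
    using unipotent_commuting_of_large_eigenspace[OF _ invertible_lifted_form two_nonzero_closure
        lifted_isometry assms] by blast
  have "u \<in> SO (lift_mat A)"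
    using SO_of_isometry[OF two_nonzero_closure u(4)] u(5) lifted_form_eq by simp
  thus False using regular u(1-3) by (simp add: regular_semisimple_def)
qed

lemma obtain_diagonalization:
  obtains P D where "diagonalized_isometry lifted_form P D" "lift_mat g = P ** D ** matrix_inv P"
proof -
  obtain P D :: "'a alg_closure^'n^'n"
    where "invertible P" "diagonal_mat D" "lift_mat g = P ** D ** matrix_inv P"
    using regular unfolding regular_semisimple_def semisimple_def by blast
  thus ?thesis
    using that invertible_lifted_form lifted_isometry by (simp add: diagonalized_isometry_def)
qed

lemma nondegenerate_eigenspace:
  assumes "c * c = 1" shows "nondeg_subspace A (eigenspace g c)"
proof -
  obtain P D where PD: "diagonalized_isometry lifted_form P D" "lift_mat g = P ** D ** matrix_inv P"
    by (rule obtain_diagonalization)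
  have cc: "to_ac c * to_ac c = 1"
    using arg_cong[OF assms, of to_ac] by (simp only: to_ac_mult to_ac_1)
  have lifted: "\<forall>x\<in>eigenspace (lift_mat g) (to_ac c). x \<noteq> 0 \<longrightarrow>
      (\<exists>y\<in>eigenspace (lift_mat g) (to_ac c). bilin lifted_form x y \<noteq> 0)"
    using diagonalized_isometry.eigenspace_nondegenerate[OF PD(1) cc] unfolding PD(2) by blast
  show ?thesis
    unfolding nondeg_subspace_def polar_eq_bilin
  proof (intro conjI ballI impI)
    show "vec.subspace (eigenspace g c)" by (rule subspace_eigenspace)
    fix u assume "u \<in> eigenspace g c" "\<forall>v\<in>eigenspace g c. bilin (A + transpose A) u v = 0"
    thus "u = 0"
      by (rule nondegenerate_eigenspace_of_lift[OF lifted])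
  qed
qed

lemma dim_eigenspaces_one_and_minus_one:
  assumes "odd CARD('n)"
  shows "vec.dim (eigenspace g 1) = 1" "vec.dim (eigenspace g (-1)) = 0 \<or> vec.dim (eigenspace g (-1)) = 2"
proof -
  obtain P D where PD: "diagonalized_isometry lifted_form P D" "lift_mat g = P ** D ** matrix_inv P"
    by (rule obtain_diagonalization)
  interpret diagonalized_isometry lifted_form P D by (rule PD(1))
  have dims: "vec.dim (eigenspace g c) = card {i. D$i$i = to_ac c}" for c
    using dim_eigenspace_lift_mat[of g c] dim_eigenspace_conjugate[OF invertible_P diagonal_D] PD(2)
    by simp
  have "det P * det (matrix_inv P) = 1"
    using matrix_mul_matrix_inv(1)[OF invertible_P] by (metis det_I det_mul)
  moreover have "det (lift_mat g) = det D * (det P * det (matrix_inv P))"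
    unfolding PD(2) by (simp add: det_mul mult_ac)
  moreover have "det (lift_mat g) = 1" using in_SO by (simp add: SO_def det_lift_mat)
  ultimately have "det D = 1" by simp
  hence prod: "(\<Prod>i\<in>UNIV. D$i$i) = 1"
    using det_diagonal[of D] diagonal_D by (simp add: diagonal_mat_def)
  have nonzero: "D$i$i \<noteq> 0" for i
  proof
    assume "D$i$i = 0"
    hence "(\<Prod>i\<in>UNIV. D$i$i) = 0" by (intro prod_zero) auto
    thus False using prod by simp
  qed
  have bound: "card {i. D$i$i = c} \<le> 2" if "c * c = 1" for c
    using dim_lifted_eigenspace_le_2[OF that] dim_eigenspace_conjugate[OF invertible_P diagonal_D] PD(2)
    by simp
  note mult = multiplicities_of_one_and_minus_one[of "\<lambda>i. D$i$i", OF two_nonzero_closure nonzero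
      card_eigenvalue_eq_inverse prod assms bound bound]
  show "vec.dim (eigenspace g 1) = 1" using mult(1) dims[of 1] by simp
  show "vec.dim (eigenspace g (-1)) = 0 \<or> vec.dim (eigenspace g (-1)) = 2"
    using mult(2) dims[of "-1"] by simp
qed

lemma stable_nondegenerate_line:
  assumes "odd CARD('n)" and L: "nondeg_subspace A L" "vec.dim L = 1" "(\<lambda>v. g *v v) ` L = L"
  shows "L = eigenspace g 1 \<or> L \<subseteq> eigenspace g (-1)"
proof -
  have "vec.subspace L" using L(1) by (simp add: nondeg_subspace_def)
  moreover have "vec.dim (eigenspace g 1) \<le> vec.dim L"
    using dim_eigenspaces_one_and_minus_one(1)[OF assms(1)] L(2) by simp
  moreover have "L \<subseteq> eigenspace g 1 \<or> L \<subseteq> eigenspace g (-1)"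
    by (rule stable_nondegenerate_line_in_eigenspace[OF SO_isometry[OF in_SO] L])
  ultimately show ?thesis using vec.subspace_dim_equal[OF _ subspace_eigenspace, of L g 1] by blast
qed

lemma stable_nondegenerate_lines:
  assumes odd_dim: "odd CARD('n)"
  shows "(\<forall>L. nondeg_subspace A L \<and> vec.dim L = 1 \<and> (\<lambda>v. g *v v) ` L = L \<longrightarrow> L = eigenspace g 1)
       \<or> (\<exists>U. nondeg_subspace A U \<and> vec.dim U = 2 \<and> (\<forall>u\<in>U. g *v u = - u)
            \<and> (\<forall>L. nondeg_subspace A L \<and> vec.dim L = 1 \<and> (\<lambda>v. g *v v) ` L = L
                  \<longrightarrow> L = eigenspace g 1 \<or> L \<subseteq> U))"
proof -
  have lines: "L = eigenspace g 1 \<or> L \<subseteq> eigenspace g (-1)"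
    if "nondeg_subspace A L \<and> vec.dim L = 1 \<and> (\<lambda>v. g *v v) ` L = L" for L
    using stable_nondegenerate_line[OF odd_dim] that by blast
  from dim_eigenspaces_one_and_minus_one(2)[OF odd_dim] show ?thesis
  proof
    assume dim_0: "vec.dim (eigenspace g (-1)) = 0"
    have "\<not> L \<subseteq> eigenspace g (-1)" if "vec.dim L = 1" for L
    proof
      assume "L \<subseteq> eigenspace g (-1)"
      hence "vec.dim L \<le> vec.dim (eigenspace g (-1))" by (rule vec.dim_subset)
      thus False using that dim_0 by (simp del: vec.dim_eq_0)
    qed
    hence "\<forall>L. nondeg_subspace A L \<and> vec.dim L = 1 \<and> (\<lambda>v. g *v v) ` L = L \<longrightarrow> L = eigenspace g 1"
      using lines by blast
    thus ?thesis ..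
  next
    assume dim_2: "vec.dim (eigenspace g (-1)) = 2"
    show ?thesis
    proof (intro disjI2 exI[of _ "eigenspace g (-1)"] conjI)
      show "nondeg_subspace A (eigenspace g (-1))" using nondegenerate_eigenspace[of "-1"] by simp
      show "\<forall>u\<in>eigenspace g (-1). g *v u = - u" by (simp add: eigenspace_def)
      show "\<forall>L. nondeg_subspace A L \<and> vec.dim L = 1 \<and> (\<lambda>v. g *v v) ` L = L
          \<longrightarrow> L = eigenspace g 1 \<or> L \<subseteq> eigenspace g (-1)"
        using lines by blast
    qed (rule dim_2)
  qed
qed

end

theorem mainTheorem16:
  fixes A :: "'a::{finite,field}^'n::finite^'n"
    and g :: "'a^'n^'n"
  assumes q_odd: "odd CARD('a)"
    and dim_odd: "CARD('n) = 2 * m + 1"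
    and nondeg: "nondegenerate_form A"
    and g_Omega: "g \<in> Omega A"
    and g_reg: "regular_semisimple A g"
  shows "\<exists>L0. nondeg_subspace A L0 \<and> vec.dim L0 = 1 \<and> (\<forall>v\<in>L0. g *v v = v)
          \<and> vec.dim (fixed_space g) = 1
          \<and> ((\<forall>L. nondeg_subspace A L \<and> vec.dim L = 1 \<and> (\<lambda>v. g *v v) ` L = L \<longrightarrow> L = L0)
             \<or> (\<exists>U. nondeg_subspace A U \<and> vec.dim U = 2 \<and> (\<forall>u\<in>U. g *v u = - u)
                  \<and> (\<forall>L. nondeg_subspace A L \<and> vec.dim L = 1 \<and> (\<lambda>v. g *v v) ` L = L
                        \<longrightarrow> L = L0 \<or> L \<subseteq> U)))"
proof -
  interpret regular_semisimple_isometry A g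
    using two_neq_zero_if_odd_card[OF q_odd] nondeg Omega_subset_SO[OF g_Omega] g_reg
    by unfold_locales
  have odd_dim: "odd CARD('n)" using dim_odd by simp
  show ?thesis
  proof (intro exI[of _ "eigenspace g 1"] conjI)
    show "nondeg_subspace A (eigenspace g 1)" using nondegenerate_eigenspace[of 1] by simp
    show "vec.dim (eigenspace g 1) = 1" "vec.dim (fixed_space g) = 1"
      using dim_eigenspaces_one_and_minus_one(1)[OF odd_dim] by (simp_all add: fixed_space_eq_eigenspace)
    show "\<forall>v\<in>eigenspace g 1. g *v v = v" by (simp add: eigenspace_def)
  qed (rule stable_nondegenerate_lines[OF odd_dim])
qed

end
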